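(* Let $\mathbb F_q$ be a finite field, let $B \subseteq \mathbb F_q^m$ with $r := \mathrm{rank}_{\mathrm{aff}}(B) \geq 1$, and let $\mathcal F$ be any family of affine configurations (subsets of finite-dimensional vector spaces over $\mathbb F_q$). Let $n \geq r$, $N = q^n$, and let $\alpha$ be defined by $\mathrm{ex}_{\mathrm{aff}}(n, B \times \mathcal F) = \alpha N$. Let $c(B,n,\alpha)$ denote the minimum, over all $A \subseteq \mathbb F_q^n$ with $|A| = \alpha N$, of the number of non-degenerate affine homomorphisms $B \to A$. Then \[c(B,n,\alpha) \leq q^{r-1} N^{r-1}\, \mathrm{ex}_{\mathrm{aff}}(n-r+1, \mathcal F).\]
   Context: An affine relation on $x_1,\ldots,x_k$ is an equation $\sum_i \lambda_i x_i = 0$ with $\lambda_i \in \mathbb F_q$, $\sum_i \lambda_i = 0$; a set is affinely independent if it has no such relation with some $\lambda_i \neq 0$, and $\mathrm{rank}_{\mathrm{aff}}(B)$ is the size of a maximal affinely independent subset of $B$. For $B \subseteq \mathbb F_q^m$, $A \subseteq \mathbb F_q^n$, an affine homomorphism $B \to A$ is a map extending to an affine map $\mathbb F_q^m \to \mathbb F_q^n$; it is non-degenerate if it is injective and its inverse on the image is also an affine homomorphism. $A$ contains an affine copy of $B$ if there is a non-degenerate affine homomorphism $B \to A$. For a family $\mathcal B$ of configurations, $\mathrm{ex}_{\mathrm{aff}}(n,\mathcal B)$ is the maximum size of a subset of $\mathbb F_q^n$ containing no affine copy of any member of $\mathcal B$. For $B \subseteq \mathbb F_q^m$ and $F \subseteq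 \mathbb F_q^{k}$, $B \times F = \{(x,y) \in \mathbb F_q^{m+k} : x \in B, y \in F\}$, and $B \times \mathcal F := \{B \times F : F \in \mathcal F\}$. *)

theory Defs
  imports Main
begin

text \<open>Vectors of F_q^n are represented as functions nat => 'a vanishing at all
indices >= n.\<close>
definition fvec :: "nat \<Rightarrow> (nat \<Rightarrow> 'a::zero) set" where
  "fvec n = {x. \<forall>i\<ge>n. x i = 0}"

definition affine_map :: "nat \<Rightarrow> nat \<Rightarrow> ((nat \<Rightarrow> 'a::comm_ring_1) \<Rightarrow> (nat \<Rightarrow> 'a)) \<Rightarrow> bool" where
  "affine_map m n f \<longleftrightarrow> (\<exists>(M :: nat \<Rightarrow> nat \<Rightarrow> 'a) (b :: nat \<Rightarrow> 'a).
     \<forall>x\<in>fvec m. f x = (\<lambda>i. if i < n then b i + (\<Sum>j<m. M i j * x j) else 0))"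

definition affine_hom :: "nat \<Rightarrow> nat \<Rightarrow> (nat \<Rightarrow> 'a::comm_ring_1) set \<Rightarrow> ((nat \<Rightarrow> 'a) \<Rightarrow> (nat \<Rightarrow> 'a)) \<Rightarrow> bool" where
  "affine_hom m n B \<phi> \<longleftrightarrow> (\<exists>f. affine_map m n f \<and> (\<forall>x\<in>B. \<phi> x = f x))"

definition nondeg_hom :: "nat \<Rightarrow> nat \<Rightarrow> (nat \<Rightarrow> 'a::comm_ring_1) set \<Rightarrow> (nat \<Rightarrow> 'a) set \<Rightarrow> ((nat \<Rightarrow> 'a) \<Rightarrow> (nat \<Rightarrow> 'a)) \<Rightarrow> bool" where
  "nondeg_hom m n B A \<phi> \<longleftrightarrow> (\<forall>x\<in>B. \<phi> x \<in> A) \<and> affine_hom m n B \<phi> \<and> inj_on \<phi> B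
     \<and> affine_hom n m (\<phi> ` B) (the_inv_into B \<phi>)"

definition affine_copy :: "nat \<Rightarrow> nat \<Rightarrow> (nat \<Rightarrow> 'a::comm_ring_1) set \<Rightarrow> (nat \<Rightarrow> 'a) set \<Rightarrow> bool" where
  "affine_copy m n B A \<longleftrightarrow> (\<exists>\<phi>. nondeg_hom m n B A \<phi>)"

text \<open>Number of non-degenerate affine homomorphisms B -> A (maps B -> A are
identified with functions that are the zero vector outside B).\<close>
definition num_nondeg_hom :: "nat \<Rightarrow> nat \<Rightarrow> (nat \<Rightarrow> 'a::comm_ring_1) set \<Rightarrow> (nat \<Rightarrow> 'a) set \<Rightarrow> nat" where
  "num_nondeg_hom m n B A = card {\<phi>. nondeg_hom m n B A \<phi> \<and> (\<forall>x. x \<notin> B \<longrightarrow> \<phi> x = (\<lambda>_. 0))}"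

text \<open>A configuration is a pair (k, C) with C a subset of F^k.\<close>
type_synonym 'a config = "nat \<times> (nat \<Rightarrow> 'a) set"

text \<open>ex_aff(n, family): max size of a subset of F^n with no affine copy of any member
(0 if no subset qualifies).\<close>
definition ex_aff :: "nat \<Rightarrow> ('a::comm_ring_1) config set \<Rightarrow> nat" where
  "ex_aff n \<B> = Max (insert 0 {card A | A. A \<subseteq> fvec n \<and> (\<forall>(k, C)\<in>\<B>. \<not> affine_copy k n C A)})"

definition conf_prod :: "nat \<Rightarrow> (nat \<Rightarrow> 'a::zero) set \<Rightarrow> 'a config \<Rightarrow> 'a config" where
  "conf_prod m B KF = (m + fst KF,
     {(\<lambda>i. if i < m then x i else y (i - m)) | x y. x \<in> B \<and> y \<in> snd KF})"

definition aff_indep :: "(nat \<Rightarrow> 'a::comm_ring_1) set \<Rightarrow> bool" where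
  "aff_indep S \<longleftrightarrow> (\<forall>c. (\<Sum>x\<in>S. c x) = 0 \<and> (\<forall>i. (\<Sum>x\<in>S. c x * x i) = 0)
      \<longrightarrow> (\<forall>x\<in>S. c x = 0))"

definition rank_aff :: "(nat \<Rightarrow> 'a::comm_ring_1) set \<Rightarrow> nat" where
  "rank_aff B = Max {card S | S. S \<subseteq> B \<and> finite S \<and> aff_indep S}"

text \<open>c(B,n,alpha) with alpha N = s: minimum over A in F^n with |A| = s.\<close>
definition c_min :: "nat \<Rightarrow> nat \<Rightarrow> (nat \<Rightarrow> 'a::comm_ring_1) set \<Rightarrow> nat \<Rightarrow> nat" where
  "c_min m n B s = Min {num_nondeg_hom m n B A | A. A \<subseteq> fvec n \<and> card A = s}"

end

theory Submission
  imports Defs "HOL-Library.FuncSet"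
begin

(* Fix a maximal affinely independent S in B, a point b1 of S, and an extremal set A containing
   no affine copy of any B x F.
   A non-degenerate homomorphism phi : B -> A is determined by the card S - 1 differences
   phi x - phi b1 (x in S), which take at most N^(card S - 1) values, together with phi b1: two
   homomorphisms with the same differences are translates phi0 + t of each other, where
   phi0 ` B + t is contained in A. Gaussian elimination on the differences of phi0 yields
   card S - 1 coordinates J from which an affine left inverse of phi0 can be read off. Sorting
   the admissible t by their q^(card S - 1) possible values on J, each class, restricted to the
   remaining n - card S + 1 coordinates, is F-free: a copy of F there, added to phi0, would be an
   affine copy of B x F in A. *)

lemma fvecD: "x \<in> fvec n \<Longrightarrow> i \<ge> n \<Longrightarrow> x i = 0"
  by (simp add: fvec_def)

lemma inj_on_restrict_fvec: "inj_on (\<lambda>x. restrict x {..<n}) (fvec n)"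
proof (rule inj_onI)
  fix x y :: "nat \<Rightarrow> 'a" assume "x \<in> fvec n" "y \<in> fvec n" "restrict x {..<n} = restrict y {..<n}"
  then show "x = y"
    by (metis fvecD fun_eq_iff lessThan_iff not_le restrict_apply')
qed

lemma finite_fvec: "finite (fvec n :: (nat \<Rightarrow> 'a::{finite,zero}) set)"
  by (rule inj_on_finite[OF inj_on_restrict_fvec, of _ "PiE {..<n} (\<lambda>_. UNIV)"])
     (auto simp: finite_PiE image_subset_iff restrict_PiE_iff)

lemma finite_subset_fvec: "A \<subseteq> fvec n \<Longrightarrow> finite (A :: (nat \<Rightarrow> 'a::{finite,zero}) set)"
  by (rule finite_subset[OF _ finite_fvec])

lemma card_fvec_le: "card (fvec n :: (nat \<Rightarrow> 'a::{finite,zero}) set) \<le> card (UNIV :: 'a set) ^ n"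
proof -
  have "card (fvec n :: (nat \<Rightarrow> 'a) set) \<le> card (PiE {..<n} (\<lambda>_. UNIV :: 'a set))"
    by (rule card_inj_on_le[OF inj_on_restrict_fvec]) (auto simp: finite_PiE image_subset_iff restrict_PiE_iff)
  then show ?thesis by (simp add: card_PiE)
qed

lemma card_le_fibers:
  assumes "finite A" "finite D" "f ` A \<subseteq> D" "\<And>d. d \<in> D \<Longrightarrow> card {x \<in> A. f x = d} \<le> k"
  shows "card A \<le> card D * k"
proof -
  have "A = (\<Union>d\<in>D. {x \<in> A. f x = d})" using assms(3) by blast
  then have "card A \<le> (\<Sum>d\<in>D. card {x \<in> A. f x = d})"
    using card_UN_le[OF assms(2), of "\<lambda>d. {x \<in> A. f x = d}"] by simp
  also have "\<dots> \<le> card D * k"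
    using sum_bounded_above[of D "\<lambda>d. card {x \<in> A. f x = d}" k] assms(4) by simp
  finally show ?thesis .
qed

lemma affine_mapI:
  assumes "\<And>x. x \<in> fvec m \<Longrightarrow> f x = (\<lambda>i. if i < n then b i + (\<Sum>j<m. M i j * x j) else 0)"
  shows "affine_map m n f"
  unfolding affine_map_def using assms by blast

lemma affine_mapE:
  assumes "affine_map m n f"
  obtains M b where "\<And>x. x \<in> fvec m \<Longrightarrow> f x = (\<lambda>i. if i < n then b i + (\<Sum>j<m. M i j * x j) else 0)"
  using assms unfolding affine_map_def by blast

lemma affine_map_in_fvec: "affine_map m n f \<Longrightarrow> x \<in> fvec m \<Longrightarrow> f x \<in> fvec n"
  by (erule affine_mapE) (simp add: fvec_def)

lemma affine_map_cong:
  "affine_map m n f \<Longrightarrow> (\<And>x. x \<in> fvec m \<Longrightarrow> g x = f x) \<Longrightarrow> affine_map m n g"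
  unfolding affine_map_def by metis

lemma affine_map_comp:
  fixes g :: "(nat \<Rightarrow> 'a::comm_ring_1) \<Rightarrow> nat \<Rightarrow> 'a"
  assumes g: "affine_map m k g" and f: "affine_map k n f"
  shows "affine_map m n (\<lambda>x. f (g x))"
proof -
  obtain M b where f_eq: "\<And>x. x \<in> fvec k \<Longrightarrow> f x = (\<lambda>i. if i < n then b i + (\<Sum>j<k. M i j * x j) else 0)"
    using f by (elim affine_mapE) blast
  obtain M' b' where g_eq: "\<And>x. x \<in> fvec m \<Longrightarrow> g x = (\<lambda>i. if i < k then b' i + (\<Sum>j<m. M' i j * x j) else 0)"
    using g by (elim affine_mapE) blast
  show ?thesis
  proof (rule affine_mapI[where b = "\<lambda>i. b i + (\<Sum>j<k. M i j * b' j)" and M = "\<lambda>i l. \<Sum>j<k. M i j * M' j l"])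
    fix x :: "nat \<Rightarrow> 'a" assume x: "x \<in> fvec m"
    have g_comb: "(\<Sum>j<k. M i j * g x j) = (\<Sum>j<k. M i j * b' j) + (\<Sum>l<m. (\<Sum>j<k. M i j * M' j l) * x l)" for i
    proof -
      have "(\<Sum>j<k. M i j * g x j) = (\<Sum>j<k. M i j * b' j) + (\<Sum>j<k. \<Sum>l<m. M i j * M' j l * x l)"
        using g_eq[OF x]
        by (simp add: distrib_left sum.distrib sum_distrib_left mult.assoc)
      then show ?thesis
        by (simp add: sum.swap[of _ "{..<k}"] sum_distrib_right)
    qed
    show "f (g x) = (\<lambda>i. if i < n then b i + (\<Sum>j<k. M i j * b' j) + (\<Sum>l<m. (\<Sum>j<k. M i j * M' j l) * x l) else 0)"
      unfolding f_eq[OF affine_map_in_fvec[OF g x]] g_comb by (simp only: add.assoc)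
  qed
qed

lemma affine_map_add:
  fixes f :: "(nat \<Rightarrow> 'a::comm_ring_1) \<Rightarrow> nat \<Rightarrow> 'a"
  assumes f: "affine_map m n f" and g: "affine_map m n g"
  shows "affine_map m n (\<lambda>x i. f x i + g x i)"
proof -
  obtain M b where "\<And>x. x \<in> fvec m \<Longrightarrow> f x = (\<lambda>i. if i < n then b i + (\<Sum>j<m. M i j * x j) else 0)"
    using f by (elim affine_mapE) blast
  moreover obtain M' b' where "\<And>x. x \<in> fvec m \<Longrightarrow> g x = (\<lambda>i. if i < n then b' i + (\<Sum>j<m. M' i j * x j) else 0)"
    using g by (elim affine_mapE) blast
  ultimately show ?thesis
    by (intro affine_mapI[where b = "\<lambda>i. b i + b' i" and M = "\<lambda>i j. M i j + M' i j"])
       (auto simp: distrib_right sum.distrib algebra_simps)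
qed

lemma affine_map_diff:
  fixes f :: "(nat \<Rightarrow> 'a::comm_ring_1) \<Rightarrow> nat \<Rightarrow> 'a"
  assumes f: "affine_map m n f" and g: "affine_map m n g"
  shows "affine_map m n (\<lambda>x i. f x i - g x i)"
proof -
  obtain M b where "\<And>x. x \<in> fvec m \<Longrightarrow> f x = (\<lambda>i. if i < n then b i + (\<Sum>j<m. M i j * x j) else 0)"
    using f by (elim affine_mapE) blast
  moreover obtain M' b' where "\<And>x. x \<in> fvec m \<Longrightarrow> g x = (\<lambda>i. if i < n then b' i + (\<Sum>j<m. M' i j * x j) else 0)"
    using g by (elim affine_mapE) blast
  ultimately show ?thesis
    by (intro affine_mapI[where b = "\<lambda>i. b i - b' i" and M = "\<lambda>i j. M i j - M' i j"])
       (auto simp: left_diff_distrib sum_subtractf algebra_simps)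
qed

lemma affine_map_const: "c \<in> fvec n \<Longrightarrow> affine_map m n (\<lambda>_. c)"
  by (rule affine_mapI[where b = c and M = "\<lambda>_ _. 0"]) (auto simp: fvec_def)

lemma affine_map_select:
  assumes "\<And>i. i < n \<Longrightarrow> P i \<Longrightarrow> \<sigma> i < m"
  shows "affine_map m n (\<lambda>z i. if i < n then c i + (if P i then z (\<sigma> i) else 0) else 0)"
proof (rule affine_mapI[where b = c and M = "\<lambda>i j. if P i \<and> j = \<sigma> i then 1 else 0"])
  fix x :: "nat \<Rightarrow> 'a"
  have "(if P i then x (\<sigma> i) else 0) = (\<Sum>j<m. (if P i \<and> j = \<sigma> i then 1 else 0) * x j)" if "i < n" for i
    using assms[OF that] by (auto simp: if_distrib[of "\<lambda>a. a * _"] cong: if_cong)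
  then show "(\<lambda>i. if i < n then c i + (if P i then x (\<sigma> i) else 0) else 0) =
    (\<lambda>i. if i < n then c i + (\<Sum>j<m. (if P i \<and> j = \<sigma> i then 1 else 0) * x j) else 0)"
    by auto
qed

lemma affine_map_id: "affine_map n n (\<lambda>x. x)"
  by (rule affine_map_cong[OF affine_map_select[where c = "\<lambda>_. 0" and P = "\<lambda>_. True" and \<sigma> = id]])
     (auto simp: fvec_def)

lemma nondeg_homE:
  assumes "nondeg_hom m n B A \<phi>"
  obtains f g where "affine_map m n f" "\<forall>b\<in>B. \<phi> b = f b" "affine_map n m g" "\<forall>b\<in>B. g (\<phi> b) = b"
proof -
  obtain f where f: "affine_map m n f" "\<forall>b\<in>B. \<phi> b = f b"
    using assms unfolding nondeg_hom_def affine_hom_def by blast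
  obtain g where g: "affine_map n m g" "\<forall>u\<in>\<phi> ` B. the_inv_into B \<phi> u = g u"
    using assms unfolding nondeg_hom_def affine_hom_def by blast
  have "\<forall>b\<in>B. g (\<phi> b) = b"
    using g(2) the_inv_into_f_f[of \<phi> B] assms by (simp add: nondeg_hom_def)
  with f g(1) show ?thesis by (rule that)
qed

lemma nondeg_homI:
  assumes "\<forall>x\<in>P. \<Phi> x \<in> A" "affine_map k n f" "\<forall>x\<in>P. \<Phi> x = f x"
    and "affine_map n k \<Psi>" "\<forall>x\<in>P. \<Psi> (\<Phi> x) = x"
  shows "nondeg_hom k n P A \<Phi>"
proof -
  have inj: "inj_on \<Phi> P" by (rule inj_on_inverseI[of _ \<Psi>]) (use assms(5) in blast)
  have "\<forall>u\<in>\<Phi> ` P. the_inv_into P \<Phi> u = \<Psi> u"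
    using the_inv_into_f_f[OF inj] assms(5) by auto
  then show ?thesis using assms inj unfolding nondeg_hom_def affine_hom_def by blast
qed

definition vec_append :: "nat \<Rightarrow> (nat \<Rightarrow> 'a) \<Rightarrow> (nat \<Rightarrow> 'a) \<Rightarrow> nat \<Rightarrow> 'a" where
  "vec_append m x y = (\<lambda>i. if i < m then x i else y (i - m))"

definition vec_take :: "nat \<Rightarrow> (nat \<Rightarrow> 'a::zero) \<Rightarrow> nat \<Rightarrow> 'a" where
  "vec_take m z = (\<lambda>i. if i < m then z i else 0)"

definition vec_drop :: "nat \<Rightarrow> nat \<Rightarrow> (nat \<Rightarrow> 'a::zero) \<Rightarrow> nat \<Rightarrow> 'a" where
  "vec_drop m k z = (\<lambda>i. if i < k then z (i + m) else 0)"

lemma conf_prod_eq: "conf_prod m B (k, F) = (m + k, {vec_append m x y | x y. x \<in> B \<and> y \<in> F})"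
  by (simp add: conf_prod_def vec_append_def)

lemma vec_take_append: "x \<in> fvec m \<Longrightarrow> vec_take m (vec_append m x y) = x"
  by (auto simp: vec_take_def vec_append_def fun_eq_iff fvec_def)

lemma vec_drop_append: "y \<in> fvec k \<Longrightarrow> vec_drop m k (vec_append m x y) = y"
  by (auto simp: vec_drop_def vec_append_def fun_eq_iff fvec_def)

lemma affine_map_vec_take: "affine_map (m + k) m (vec_take m)"
  by (rule affine_map_cong[OF affine_map_select[where c = "\<lambda>_. 0" and P = "\<lambda>_. True" and \<sigma> = id]])
     (auto simp: vec_take_def)

lemma affine_map_vec_drop: "affine_map (m + k) k (vec_drop m k)"
  by (rule affine_map_cong[OF affine_map_select[where c = "\<lambda>_. 0" and P = "\<lambda>_. True" and \<sigma> = "\<lambda>i. i + m"]])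
     (auto simp: vec_drop_def)

lemma affine_map_vec_append:
  fixes f :: "(nat \<Rightarrow> 'a::comm_ring_1) \<Rightarrow> nat \<Rightarrow> 'a"
  assumes f: "affine_map k m f" and g: "affine_map k l g"
  shows "affine_map k (m + l) (\<lambda>z. vec_append m (f z) (g z))"
proof -
  obtain M b where "\<And>x. x \<in> fvec k \<Longrightarrow> f x = (\<lambda>i. if i < m then b i + (\<Sum>j<k. M i j * x j) else 0)"
    using f by (elim affine_mapE) blast
  moreover obtain M' b' where "\<And>x. x \<in> fvec k \<Longrightarrow> g x = (\<lambda>i. if i < l then b' i + (\<Sum>j<k. M' i j * x j) else 0)"
    using g by (elim affine_mapE) blast
  ultimately show ?thesis
    by (intro affine_mapI[where b = "vec_append m b b'" and M = "vec_append m M M'"])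
       (auto simp: vec_append_def fun_eq_iff)
qed

definition lincomb :: "('b \<Rightarrow> 'a::comm_ring_1) \<Rightarrow> ('b \<Rightarrow> nat \<Rightarrow> 'a) \<Rightarrow> 'b set \<Rightarrow> nat \<Rightarrow> 'a" where
  "lincomb c v I = (\<lambda>i. \<Sum>x\<in>I. c x * v x i)"

definition lin_span :: "('b \<Rightarrow> nat \<Rightarrow> 'a::comm_ring_1) \<Rightarrow> 'b set \<Rightarrow> (nat \<Rightarrow> 'a) set" where
  "lin_span v I = range (\<lambda>c. lincomb c v I)"

definition lin_indep :: "('b \<Rightarrow> nat \<Rightarrow> 'a::comm_ring_1) \<Rightarrow> 'b set \<Rightarrow> bool" where
  "lin_indep v I \<longleftrightarrow> (\<forall>c. lincomb c v I = (\<lambda>_. 0) \<longrightarrow> (\<forall>x\<in>I. c x = 0))"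

definition aff_span :: "(nat \<Rightarrow> 'a::comm_ring_1) set \<Rightarrow> (nat \<Rightarrow> 'a) set" where
  "aff_span S = {lincomb l (\<lambda>x. x) S | l. sum l S = 1}"

lemma aff_spanI: "sum l S = 1 \<Longrightarrow> lincomb l (\<lambda>x. x) S = b \<Longrightarrow> b \<in> aff_span S"
  unfolding aff_span_def by blast

lemma aff_indep_lincomb:
  "aff_indep S \<longleftrightarrow> (\<forall>c. sum c S = 0 \<and> lincomb c (\<lambda>x. x) S = (\<lambda>_. 0) \<longrightarrow> (\<forall>x\<in>S. c x = 0))"
  by (simp add: aff_indep_def lincomb_def fun_eq_iff)

lemma lincomb_in_fvec: "\<forall>x\<in>I. v x \<in> fvec n \<Longrightarrow> lincomb c v I \<in> fvec n"
  by (simp add: lincomb_def fvec_def)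

lemma lincomb_cong:
  "(\<And>x. x \<in> I \<Longrightarrow> c x = c' x) \<Longrightarrow> (\<And>x. x \<in> I \<Longrightarrow> v x = v' x) \<Longrightarrow> lincomb c v I = lincomb c' v' I"
  unfolding lincomb_def by (auto intro!: sum.cong)

lemma lincomb_insert:
  "finite I \<Longrightarrow> a \<notin> I \<Longrightarrow> lincomb c v (insert a I) = (\<lambda>i. c a * v a i + lincomb c v I i)"
  by (simp add: lincomb_def)

lemma lincomb_remove:
  "finite I \<Longrightarrow> a \<in> I \<Longrightarrow> lincomb c v I = (\<lambda>i. c a * v a i + lincomb c v (I - {a}) i)"
  by (simp add: lincomb_def sum.remove)

lemma affine_map_affine_comb:
  assumes h: "affine_map m n h" and v: "\<forall>x\<in>I. v x \<in> fvec m" and l: "sum l I = 1"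
  shows "h (lincomb l v I) = lincomb l (\<lambda>x. h (v x)) I"
proof -
  obtain M b where h_eq: "\<And>x. x \<in> fvec m \<Longrightarrow> h x = (\<lambda>i. if i < n then b i + (\<Sum>j<m. M i j * x j) else 0)"
    using h by (elim affine_mapE) blast
  have "(\<Sum>x\<in>I. l x * (b i + (\<Sum>j<m. M i j * v x j))) = sum l I * b i + (\<Sum>j<m. M i j * lincomb l v I j)" for i
    by (simp add: lincomb_def distrib_left sum.distrib sum_distrib_left sum_distrib_right
        sum.swap[of _ I] mult.left_commute)
  then show ?thesis
    using h_eq lincomb_in_fvec[OF v] v l by (simp add: lincomb_def fun_eq_iff)
qed

lemma affine_map_zero_sum_comb:
  assumes h: "affine_map m n h" and v: "\<forall>x\<in>I. v x \<in> fvec m"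
    and \<mu>: "sum \<mu> I = 0" "lincomb \<mu> v I = (\<lambda>_. 0)"
  shows "lincomb \<mu> (\<lambda>x. h (v x)) I = (\<lambda>_. 0)"
proof -
  obtain M b where h_eq: "\<And>x. x \<in> fvec m \<Longrightarrow> h x = (\<lambda>i. if i < n then b i + (\<Sum>j<m. M i j * x j) else 0)"
    using h by (elim affine_mapE) blast
  have "(\<Sum>x\<in>I. \<mu> x * (b i + (\<Sum>j<m. M i j * v x j))) = sum \<mu> I * b i + (\<Sum>j<m. M i j * lincomb \<mu> v I j)" for i
    by (simp add: lincomb_def distrib_left sum.distrib sum_distrib_left sum_distrib_right
        sum.swap[of _ I] mult.left_commute)
  moreover have "lincomb \<mu> (\<lambda>x. h (v x)) I i = (if i < n then (\<Sum>x\<in>I. \<mu> x * (b i + (\<Sum>j<m. M i j * v x j))) else 0)" for i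
    using h_eq v by (simp add: lincomb_def)
  ultimately show ?thesis
    using \<mu> by (simp add: lincomb_def fun_eq_iff)
qed

lemma lin_span_in_fvec: "\<forall>x\<in>I. v x \<in> fvec n \<Longrightarrow> u \<in> lin_span v I \<Longrightarrow> u \<in> fvec n"
  by (auto simp: lin_span_def lincomb_in_fvec)

lemma lin_span_base: "finite I \<Longrightarrow> x \<in> I \<Longrightarrow> v x \<in> lin_span v I"
  unfolding lin_span_def lincomb_def
  by (rule range_eqI[of _ _ "\<lambda>y. if y = x then 1 else 0"])
     (auto simp: if_distrib[of "\<lambda>a. a * _"] cong: if_cong)

lemma lin_span_zero: "(\<lambda>_. 0) \<in> lin_span v I"
  unfolding lin_span_def lincomb_def by (rule range_eqI[of _ _ "\<lambda>_. 0"]) simp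

lemma lin_span_add: "u \<in> lin_span v I \<Longrightarrow> u' \<in> lin_span v I \<Longrightarrow> (\<lambda>i. u i + u' i) \<in> lin_span v I"
proof -
  assume "u \<in> lin_span v I" "u' \<in> lin_span v I"
  then obtain c c' where "u = lincomb c v I" "u' = lincomb c' v I" by (auto simp: lin_span_def)
  then have "(\<lambda>i. u i + u' i) = lincomb (\<lambda>x. c x + c' x) v I"
    by (simp add: lincomb_def distrib_right sum.distrib)
  then show ?thesis by (simp add: lin_span_def)
qed

lemma lin_span_diff: "u \<in> lin_span v I \<Longrightarrow> u' \<in> lin_span v I \<Longrightarrow> (\<lambda>i. u i - u' i) \<in> lin_span v I"
proof -
  assume "u \<in> lin_span v I" "u' \<in> lin_span v I"
  then obtain c c' where "u = lincomb c v I" "u' = lincomb c' v I" by (auto simp: lin_span_def)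
  then have "(\<lambda>i. u i - u' i) = lincomb (\<lambda>x. c x - c' x) v I"
    by (simp add: lincomb_def left_diff_distrib sum_subtractf)
  then show ?thesis by (simp add: lin_span_def)
qed

lemma lin_span_scale: "u \<in> lin_span v I \<Longrightarrow> (\<lambda>i. a * u i) \<in> lin_span v I"
proof -
  assume "u \<in> lin_span v I"
  then obtain c where "u = lincomb c v I" by (auto simp: lin_span_def)
  then have "(\<lambda>i. a * u i) = lincomb (\<lambda>x. a * c x) v I"
    by (simp add: lincomb_def sum_distrib_left mult.assoc)
  then show ?thesis by (simp add: lin_span_def)
qed

lemma lin_span_lincomb:
  "finite J \<Longrightarrow> \<forall>j\<in>J. w j \<in> lin_span v I \<Longrightarrow> lincomb a w J \<in> lin_span v I"
proof (induction J rule: finite_induct)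
  case empty
  then show ?case using lin_span_zero by (simp add: lincomb_def)
next
  case (insert j J)
  then show ?case
    by (simp add: lincomb_insert lin_span_add lin_span_scale)
qed

lemma lincomb_extend_zero:
  "finite I' \<Longrightarrow> I \<subseteq> I' \<Longrightarrow> lincomb (\<lambda>x. if x \<in> I then c x else 0) v I' = lincomb c v I"
  unfolding lincomb_def by (rule ext, rule sum.mono_neutral_cong_right) auto

lemma lin_span_mono: "finite I' \<Longrightarrow> I \<subseteq> I' \<Longrightarrow> lin_span v I \<subseteq> lin_span v I'"
  unfolding lin_span_def by (metis (no_types, lifting) image_subset_iff lincomb_extend_zero rangeI)

lemma lin_indep_insert_not_in_span:
  assumes "finite I" "a \<notin> I" "lin_indep v (insert a I)"
  shows "v a \<notin> lin_span v I"
proof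
  assume "v a \<in> lin_span v I"
  then obtain c where c: "lincomb c v I = v a" by (auto simp: lin_span_def)
  have "lincomb (c(a := -1)) v I = lincomb c v I"
    by (rule lincomb_cong) (use assms(2) in auto)
  then have "lincomb (c(a := -1)) v (insert a I) = (\<lambda>_. 0)"
    using assms(1,2) by (simp add: lincomb_insert c)
  then have "(c(a := -1)) a = 0"
    using assms(3) unfolding lin_indep_def by blast
  then show False by simp
qed

lemma lin_indep_subset: "lin_indep v I' \<Longrightarrow> I \<subseteq> I' \<Longrightarrow> finite I' \<Longrightarrow> lin_indep v I"
  unfolding lin_indep_def by (metis (mono_tags, lifting) lincomb_extend_zero subsetD)

lemma finite_rank_aff_candidates:
  assumes "B \<subseteq> (fvec m :: (nat \<Rightarrow> 'a::{finite,zero}) set)"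
  shows "finite {card S | S. S \<subseteq> B \<and> finite S \<and> P S}"
proof -
  have "{card S | S. S \<subseteq> B \<and> finite S \<and> P S} \<subseteq> {..card B}"
    using card_mono[OF finite_subset_fvec[OF assms]] by auto
  then show ?thesis using finite_subset by auto
qed

lemma card_le_rank_aff:
  assumes "B \<subseteq> (fvec m :: (nat \<Rightarrow> 'a::{finite,comm_ring_1}) set)" "S \<subseteq> B" "aff_indep S"
  shows "card S \<le> rank_aff B"
proof -
  have "card S \<in> {card S | S. S \<subseteq> B \<and> finite S \<and> aff_indep S}"
    using assms finite_subset[OF assms(2) finite_subset_fvec[OF assms(1)]]
    by (intro CollectI exI[of _ S]) simp
  then show ?thesis unfolding rank_aff_def by (rule Max_ge[OF finite_rank_aff_candidates[OF assms(1)]])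
qed

lemma rank_aff_attained:
  assumes "B \<subseteq> (fvec m :: (nat \<Rightarrow> 'a::{finite,comm_ring_1}) set)"
  obtains S where "S \<subseteq> B" "aff_indep S" "card S = rank_aff B"
proof -
  have "card {} \<in> {card S | S. S \<subseteq> B \<and> finite S \<and> aff_indep S}"
    by (rule CollectI, rule exI[of _ "{}"]) (simp add: aff_indep_def)
  then have "rank_aff B \<in> {card S | S. S \<subseteq> B \<and> finite S \<and> aff_indep S}"
    unfolding rank_aff_def by (intro Max_in[OF finite_rank_aff_candidates[OF assms]]) auto
  then show ?thesis using that by auto
qed

lemma subset_aff_span_of_max_aff_indep:
  fixes B :: "(nat \<Rightarrow> 'a::{finite,field}) set"
  assumes B: "B \<subseteq> fvec m" and S: "S \<subseteq> B" "aff_indep S" "card S = rank_aff B"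
  shows "B \<subseteq> aff_span S"
proof
  fix b assume b: "b \<in> B"
  have finS: "finite S" using S(1) B by (intro finite_subset_fvec) blast
  show "b \<in> aff_span S"
  proof (cases "b \<in> S")
    case True
    have "lincomb (\<lambda>x. if x = b then 1 else 0) (\<lambda>x. x) S = b"
      using True finS by (simp add: lincomb_def if_distrib[of "\<lambda>a. a * _"] cong: if_cong)
    moreover have "(\<Sum>x\<in>S. if x = b then 1 else 0) = (1::'a)" using True finS by simp
    ultimately show ?thesis by (rule aff_spanI[rotated])
  next
    case False
    have "card (insert b S) > rank_aff B"
      using S(3) False finS by simp
    then have "\<not> aff_indep (insert b S)"
      using card_le_rank_aff[OF B, of "insert b S"] S(1) b by fastforce
    then obtain c where c: "sum c (insert b S) = 0" "lincomb c (\<lambda>x. x) (insert b S) = (\<lambda>_. 0)"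
      and nonzero: "\<exists>x\<in>insert b S. c x \<noteq> 0"
      unfolding aff_indep_lincomb by blast
    have sum_S: "sum c S = - c b" and comb_S: "lincomb c (\<lambda>x. x) S = (\<lambda>i. - (c b * b i))"
      using c finS False by (simp_all add: lincomb_insert eq_neg_iff_add_eq_0 add.commute fun_eq_iff)
    have cb: "c b \<noteq> 0"
    proof
      assume "c b = 0"
      then have "\<forall>x\<in>S. c x = 0"
        using S(2) sum_S comb_S unfolding aff_indep_lincomb by simp
      then show False using nonzero \<open>c b = 0\<close> by blast
    qed
    have "sum (\<lambda>x. - c x / c b) S = 1"
      using sum_S cb by (simp add: sum_divide_distrib[symmetric] sum_negf)
    moreover have "lincomb (\<lambda>x. - c x / c b) (\<lambda>x. x) S = b"
      using fun_cong[OF comb_S] cb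
      by (simp add: lincomb_def fun_eq_iff sum_divide_distrib[symmetric] sum_negf)
    ultimately show ?thesis by (rule aff_spanI)
  qed
qed

lemma affine_hom_eq_on_aff_span:
  assumes B: "B \<subseteq> fvec m" and S: "S \<subseteq> B"
    and \<phi>: "affine_hom m n B \<phi>" and \<psi>: "affine_hom m n B \<psi>" and eq: "\<forall>x\<in>S. \<phi> x = \<psi> x"
    and b: "b \<in> B" "b \<in> aff_span S"
  shows "\<phi> b = \<psi> b"
proof -
  obtain f where f: "affine_map m n f" "\<forall>x\<in>B. \<phi> x = f x" using \<phi> unfolding affine_hom_def by blast
  obtain g where g: "affine_map m n g" "\<forall>x\<in>B. \<psi> x = g x" using \<psi> unfolding affine_hom_def by blast
  obtain l where l: "sum l S = 1" "b = lincomb l (\<lambda>x. x) S" using b(2) by (auto simp: aff_span_def)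
  have SB: "\<forall>x\<in>S. x \<in> fvec m" using S B by auto
  have "\<phi> b = lincomb l f S"
    using f b(1) affine_map_affine_comb[OF f(1) SB l(1)] l(2) by simp
  also have "\<dots> = lincomb l g S"
    using f(2) g(2) eq S by (intro lincomb_cong) (auto simp: subset_iff)
  also have "\<dots> = \<psi> b"
    using g b(1) affine_map_affine_comb[OF g(1) SB l(1)] l(2) by simp
  finally show ?thesis .
qed

text \<open>The vectors w j (j \<in> J) form a basis of the span in reduced row echelon form with
  pivot coordinates J.\<close>
definition pivot_basis :: "('b \<Rightarrow> nat \<Rightarrow> 'a::comm_ring_1) \<Rightarrow> 'b set \<Rightarrow> nat set \<Rightarrow> (nat \<Rightarrow> nat \<Rightarrow> 'a) \<Rightarrow> bool" where
  "pivot_basis v I J w \<longleftrightarrow>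
     (\<forall>j\<in>J. w j \<in> lin_span v I \<and> (\<forall>j'\<in>J. w j j' = (if j' = j then 1 else 0))) \<and>
     (\<forall>u\<in>lin_span v I. (\<forall>j\<in>J. u j = 0) \<longrightarrow> u = (\<lambda>_. 0))"

lemma lincomb_at_pivot:
  assumes "finite J" "\<forall>j\<in>J. \<forall>j'\<in>J. w j j' = (if j' = j then 1 else 0)" "j' \<in> J"
  shows "lincomb c w J j' = c j'"
proof -
  have "lincomb c w J j' = (\<Sum>j\<in>J. if j = j' then c j else 0)"
    unfolding lincomb_def by (rule sum.cong) (use assms(2,3) in auto)
  then show ?thesis using assms(1,3) by simp
qed

lemma pivot_basis_expansion:
  assumes pb: "pivot_basis v I J w" and "finite J" and u: "u \<in> lin_span v I"
  shows "lincomb u w J = u"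
proof -
  have deltas: "\<forall>j\<in>J. \<forall>j'\<in>J. w j j' = (if j' = j then 1 else 0)"
    and inj: "\<forall>u\<in>lin_span v I. (\<forall>j\<in>J. u j = 0) \<longrightarrow> u = (\<lambda>_. 0)"
    using pb by (simp_all add: pivot_basis_def)
  have "lincomb u w J \<in> lin_span v I"
    using pb \<open>finite J\<close> by (simp add: pivot_basis_def lin_span_lincomb)
  then have "(\<lambda>i. u i - lincomb u w J i) \<in> lin_span v I"
    by (rule lin_span_diff[OF u])
  moreover have "\<forall>j\<in>J. u j - lincomb u w J j = 0"
    using lincomb_at_pivot[OF \<open>finite J\<close> deltas] by simp
  ultimately have "(\<lambda>i. u i - lincomb u w J i) = (\<lambda>_. 0)"
    using inj by simp
  then show ?thesis by (simp add: fun_eq_iff)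
qed

text \<open>A vector of the larger span is a multiple of v a plus a vector of the smaller one; the
  multiple is read off at k and the rest vanishes by injectivity on J.\<close>
lemma lin_span_insert_eq_zero:
  fixes v :: "'b \<Rightarrow> nat \<Rightarrow> 'a::field"
  assumes inj: "\<forall>u\<in>lin_span v I. (\<forall>j\<in>J. u j = 0) \<longrightarrow> u = (\<lambda>_. 0)"
    and fin: "finite I" "a \<notin> I" and p: "p \<in> lin_span v I"
    and pJ: "\<forall>j\<in>J. v a j = p j" and k: "v a k \<noteq> p k"
    and u: "u \<in> lin_span v (insert a I)" "\<forall>j\<in>insert k J. u j = 0"
  shows "u = (\<lambda>_. 0)"
proof -
  obtain c where c: "u = lincomb c v (insert a I)" using u(1) by (auto simp: lin_span_def)
  define y where "y = (\<lambda>i. c a * p i + lincomb c v I i)"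
  have "y \<in> lin_span v I"
    unfolding y_def by (rule lin_span_add[OF lin_span_scale[OF p]]) (auto simp: lin_span_def)
  moreover have u_eq: "u i = c a * (v a i - p i) + y i" for i
    using fin by (simp add: c lincomb_insert y_def algebra_simps)
  moreover have "\<forall>j\<in>J. y j = 0" using u(2) pJ u_eq by simp
  ultimately have y: "y = (\<lambda>_. 0)" using inj by blast
  then have "c a = 0" using u(2) u_eq[of k] k by simp
  then show ?thesis using y by (simp add: fun_eq_iff u_eq)
qed

lemma pivot_basis_empty: "pivot_basis v {} {} w"
  by (simp add: pivot_basis_def lin_span_def lincomb_def)

lemma pivot_basis_insert:
  fixes v :: "'b \<Rightarrow> nat \<Rightarrow> 'a::field"
  assumes pb: "pivot_basis v I J w" and fin: "finite I" "finite J"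
    and a: "a \<notin> I" "v a \<notin> lin_span v I"
  obtains k w' where "k \<notin> J" "\<exists>u\<in>lin_span v (insert a I). u k \<noteq> 0"
    "pivot_basis v (insert a I) (insert k J) w'"
proof -
  have deltas: "\<forall>j\<in>J. \<forall>j'\<in>J. w j j' = (if j' = j then 1 else 0)"
    and w_span: "\<forall>j\<in>J. w j \<in> lin_span v I"
    and inj: "\<forall>u\<in>lin_span v I. (\<forall>j\<in>J. u j = 0) \<longrightarrow> u = (\<lambda>_. 0)"
    using pb by (simp_all add: pivot_basis_def)
  have span_mono: "lin_span v I \<subseteq> lin_span v (insert a I)"
    using fin(1) by (intro lin_span_mono) auto
  define p where "p = lincomb (v a) w J"
  define u where "u = (\<lambda>i. v a i - p i)"
  have p: "p \<in> lin_span v I"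
    unfolding p_def using fin(2) w_span by (rule lin_span_lincomb)
  have "v a \<in> lin_span v (insert a I)" using fin(1) by (simp add: lin_span_base)
  then have u: "u \<in> lin_span v (insert a I)"
    unfolding u_def using p span_mono by (intro lin_span_diff) auto
  have uJ: "\<forall>j\<in>J. u j = 0"
    using lincomb_at_pivot[OF fin(2) deltas] by (simp add: u_def p_def)
  have "v a \<noteq> p" using a(2) p by blast
  then have "u \<noteq> (\<lambda>_. 0)" by (auto simp: u_def fun_eq_iff)
  then obtain k where k: "u k \<noteq> 0" by auto
  have kJ: "k \<notin> J" using uJ k by blast
  define w' where
    "w' = (\<lambda>j. if j = k then (\<lambda>i. u i / u k) else (\<lambda>i. w j i - w j k * (u i / u k)))"
  have u_k: "(\<lambda>i. u i / u k) \<in> lin_span v (insert a I)"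
    using lin_span_scale[OF u, of "inverse (u k)"] by (simp add: field_simps)
  have "w' j \<in> lin_span v (insert a I) \<and> (\<forall>j'\<in>insert k J. w' j j' = (if j' = j then 1 else 0))"
    if j: "j \<in> insert k J" for j
  proof (cases "j = k")
    case True
    then show ?thesis using u_k k uJ by (auto simp: w'_def)
  next
    case False
    then have "j \<in> J" using j by simp
    then have "w' j \<in> lin_span v (insert a I)"
      using False lin_span_diff[OF _ lin_span_scale[OF u_k]] w_span span_mono by (auto simp: w'_def)
    then show ?thesis using False \<open>j \<in> J\<close> deltas k uJ kJ by (auto simp: w'_def)
  qed
  moreover have "\<forall>u'\<in>lin_span v (insert a I). (\<forall>j\<in>insert k J. u' j = 0) \<longrightarrow> u' = (\<lambda>_. 0)"
    using lin_span_insert_eq_zero[OF inj fin(1) a(1) p] uJ k by (simp add: u_def)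
  ultimately have "pivot_basis v (insert a I) (insert k J) w'"
    unfolding pivot_basis_def by blast
  then show ?thesis using that kJ u k by blast
qed

lemma exists_pivot_basis:
  fixes v :: "'b \<Rightarrow> nat \<Rightarrow> 'a::field"
  assumes "finite I" "\<forall>x\<in>I. v x \<in> fvec n" "lin_indep v I"
  shows "\<exists>J w. J \<subseteq> {..<n} \<and> card J = card I \<and> pivot_basis v I J w"
  using assms
proof (induction I rule: finite_induct)
  case empty
  show ?case by (intro exI[of _ "{}"]) (simp add: pivot_basis_empty)
next
  case (insert a I)
  have "lin_indep v I"
    by (rule lin_indep_subset[OF insert.prems(2)]) (use insert.hyps(1) in auto)
  then obtain J w where J: "J \<subseteq> {..<n}" "card J = card I" and pb: "pivot_basis v I J w"
    using insert.IH insert.prems(1) by auto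
  have "finite J" using J(1) by (rule finite_subset) simp
  obtain k w' where k: "k \<notin> J" "\<exists>u\<in>lin_span v (insert a I). u k \<noteq> 0"
    and pb': "pivot_basis v (insert a I) (insert k J) w'"
    using pivot_basis_insert[OF pb insert.hyps(1) \<open>finite J\<close> insert.hyps(2)]
      lin_indep_insert_not_in_span[OF insert.hyps(1,2) insert.prems(2)] by blast
  have "k < n"
    using k(2) lin_span_in_fvec[OF insert.prems(1)] by (meson fvecD not_le)
  then show ?case
    using J k(1) pb' \<open>finite J\<close> insert.hyps by (intro exI[of _ "insert k J"] exI[of _ w']) auto
qed

lemma lin_indep_differences:
  assumes g: "affine_map n m g" and S: "aff_indep S" "finite S" "b1 \<in> S"
    and f: "\<forall>x\<in>S. f x \<in> fvec n" "\<forall>x\<in>S. g (f x) = x"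
  shows "lin_indep (\<lambda>x i. f x i - f b1 i) (S - {b1})"
  unfolding lin_indep_def
proof (intro allI impI ballI)
  fix c x
  assume c: "lincomb c (\<lambda>x i. f x i - f b1 i) (S - {b1}) = (\<lambda>_. 0)" and x: "x \<in> S - {b1}"
  define \<mu> where "\<mu> = c(b1 := - sum c (S - {b1}))"
  have "\<mu> y = c y" if "y \<in> S - {b1}" for y using that by (simp add: \<mu>_def)
  then have \<mu>_S': "lincomb \<mu> v (S - {b1}) = lincomb c v (S - {b1})" "sum \<mu> (S - {b1}) = sum c (S - {b1})"
    for v :: "_ \<Rightarrow> nat \<Rightarrow> 'a"
    by (auto intro: lincomb_cong sum.cong)
  have \<mu>_b1: "\<mu> b1 = - sum c (S - {b1})" by (simp add: \<mu>_def)
  have "sum \<mu> S = 0"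
    using S(2,3) by (simp add: sum.remove \<mu>_S' \<mu>_b1)
  moreover have "lincomb \<mu> f S = (\<lambda>_. 0)"
  proof -
    have "lincomb c (\<lambda>x i. f x i - f b1 i) (S - {b1}) i = lincomb c f (S - {b1}) i - sum c (S - {b1}) * f b1 i" for i
      by (simp add: lincomb_def right_diff_distrib sum_subtractf sum_distrib_right)
    then show ?thesis
      using c S(2,3) by (simp add: lincomb_remove \<mu>_S' \<mu>_b1 fun_eq_iff)
  qed
  ultimately have "lincomb \<mu> (\<lambda>x. g (f x)) S = (\<lambda>_. 0)"
    using affine_map_zero_sum_comb[OF g f(1)] by blast
  then have "lincomb \<mu> (\<lambda>x. x) S = (\<lambda>_. 0)"
    using f(2) lincomb_cong[of S \<mu> \<mu> "\<lambda>x. g (f x)" "\<lambda>x. x"] by simp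
  then have "\<mu> x = 0" using S(1) \<open>sum \<mu> S = 0\<close> x unfolding aff_indep_lincomb by blast
  then show "c x = 0" using x by (simp add: \<mu>_def)
qed

lemma affine_image_diff_in_lin_span:
  assumes f: "affine_map m n f" and S: "S \<subseteq> fvec m" "finite S" "b1 \<in> S" and b: "b \<in> aff_span S"
  shows "(\<lambda>i. f b i - f b1 i) \<in> lin_span (\<lambda>x i. f x i - f b1 i) (S - {b1})"
proof -
  obtain l where l: "sum l S = 1" "b = lincomb l (\<lambda>x. x) S" using b by (auto simp: aff_span_def)
  have "f b = lincomb l f S"
    using affine_map_affine_comb[OF f _ l(1), where v = "\<lambda>x. x"] S(1) l(2) by auto
  then have "(\<lambda>i. f b i - f b1 i) = lincomb l (\<lambda>x i. f x i - f b1 i) S"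
    using l(1) by (simp add: lincomb_def fun_eq_iff right_diff_distrib sum_subtractf
        flip: sum_distrib_right)
  also have "\<dots> = lincomb l (\<lambda>x i. f x i - f b1 i) (S - {b1})"
    unfolding lincomb_def using S(2) by (intro ext sum.mono_neutral_right) auto
  finally show ?thesis by (simp add: lin_span_def)
qed

lemma affine_map_pivot_projection:
  assumes J: "J \<subseteq> {..<n}" and p: "p \<in> fvec n" and w: "\<forall>j\<in>J. w j \<in> fvec n"
  shows "affine_map n n (\<lambda>u i. p i + lincomb (\<lambda>j. u j - p j) w J i)"
proof (rule affine_mapI[where b = "\<lambda>i. p i - lincomb p w J i" and M = "\<lambda>i j. if j \<in> J then w j i else 0"])
  fix u :: "nat \<Rightarrow> 'a"
  have "p i + lincomb (\<lambda>j. u j - p j) w J i =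
      (if i < n then p i - lincomb p w J i + (\<Sum>j<n. (if j \<in> J then w j i else 0) * u j) else 0)" for i
  proof (cases "i < n")
    case True
    have "(\<Sum>j<n. (if j \<in> J then w j i else 0) * u j) = (\<Sum>j\<in>J. w j i * u j)"
      using J by (simp add: if_distrib[of "\<lambda>a. a * _"] sum.inter_restrict[symmetric] Int_absorb1 cong: if_cong)
    then show ?thesis
      using True by (simp add: lincomb_def sum_subtractf algebra_simps)
  next
    case False
    then show ?thesis using p w by (simp add: fvec_def lincomb_def)
  qed
  then show "(\<lambda>i. p i + lincomb (\<lambda>j. u j - p j) w J i) =
      (\<lambda>i. if i < n then p i - lincomb p w J i + (\<Sum>j<n. (if j \<in> J then w j i else 0) * u j) else 0)"
    by simp
qed

definition coordinate_retraction ::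
    "nat \<Rightarrow> nat \<Rightarrow> nat set \<Rightarrow> ((nat \<Rightarrow> 'a) \<Rightarrow> nat \<Rightarrow> 'a) \<Rightarrow> (nat \<Rightarrow> 'a::comm_ring_1) set
      \<Rightarrow> ((nat \<Rightarrow> 'a) \<Rightarrow> nat \<Rightarrow> 'a) \<Rightarrow> bool" where
  "coordinate_retraction n m J f B R \<longleftrightarrow>
     affine_map n m R \<and> (\<forall>b\<in>B. R (f b) = b) \<and> (\<forall>z z'. (\<forall>j\<in>J. z j = z' j) \<longrightarrow> R z = R z')"

text \<open>The differences f x - f b1, x \<in> S - {b1}, are independent; Gaussian elimination finds
  card S - 1 coordinates J on which they are independent, and projecting onto their span
  along the other coordinates only needs the coordinates J.\<close>
lemma exists_coordinate_retraction:
  fixes B :: "(nat \<Rightarrow> 'a::field) set"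
  assumes B: "B \<subseteq> fvec m" and S: "S \<subseteq> B" "finite S" "aff_indep S" "S \<noteq> {}"
    and span: "B \<subseteq> aff_span S"
    and f: "affine_map m n f" and g: "affine_map n m g" and gf: "\<forall>b\<in>B. g (f b) = b"
  obtains J R where "J \<subseteq> {..<n}" "card J = card S - 1" "coordinate_retraction n m J f B R"
proof -
  obtain b1 where b1: "b1 \<in> S" using S(4) by blast
  define d where "d = (\<lambda>x i. f x i - f b1 i)"
  have SB: "S \<subseteq> fvec m" using S(1) B by blast
  have fS: "\<forall>x\<in>S. f x \<in> fvec n" using affine_map_in_fvec[OF f] SB by blast
  have d_fvec: "\<forall>x\<in>S - {b1}. d x \<in> fvec n" using fS b1 by (auto simp: d_def fvec_def)
  have "\<forall>x\<in>S. g (f x) = x" using gf S(1) by blast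
  then have "lin_indep d (S - {b1})"
    unfolding d_def by (rule lin_indep_differences[OF g S(3,2) b1 fS])
  then obtain J w where J: "J \<subseteq> {..<n}" "card J = card (S - {b1})"
    and pb: "pivot_basis d (S - {b1}) J w"
    using exists_pivot_basis[OF finite_Diff[OF S(2)] d_fvec] by blast
  have "finite J" using J(1) by (rule finite_subset) simp
  have "\<forall>j\<in>J. w j \<in> lin_span d (S - {b1})" using pb by (simp add: pivot_basis_def)
  then have w_fvec: "\<forall>j\<in>J. w j \<in> fvec n" using lin_span_in_fvec[OF d_fvec] by blast
  define L where "L = (\<lambda>u i. f b1 i + lincomb (\<lambda>j. u j - f b1 j) w J i)"
  have L: "affine_map n n L"
    unfolding L_def using J(1) fS b1 w_fvec by (intro affine_map_pivot_projection) auto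
  have "coordinate_retraction n m J f B (\<lambda>u. g (L u))"
    unfolding coordinate_retraction_def
  proof (intro conjI allI impI ballI)
    show "affine_map n m (\<lambda>u. g (L u))" by (rule affine_map_comp[OF L g])
  next
    fix b assume "b \<in> B"
    have "(\<lambda>i. f b i - f b1 i) \<in> lin_span d (S - {b1})"
      unfolding d_def by (rule affine_image_diff_in_lin_span[OF f SB S(2) b1 subsetD[OF span \<open>b \<in> B\<close>]])
    then have "lincomb (\<lambda>j. f b j - f b1 j) w J = (\<lambda>i. f b i - f b1 i)"
      by (rule pivot_basis_expansion[OF pb \<open>finite J\<close>])
    then show "g (L (f b)) = b" using gf \<open>b \<in> B\<close> by (simp add: L_def)
  next
    fix z z' :: "nat \<Rightarrow> 'a" assume "\<forall>j\<in>J. z j = z' j"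
    then have "lincomb (\<lambda>j. z j - f b1 j) w J = lincomb (\<lambda>j. z' j - f b1 j) w J"
      by (intro lincomb_cong) auto
    then show "g (L z) = g (L z')" by (simp add: L_def)
  qed
  moreover have "card J = card S - 1" using J(2) S(2) b1 by simp
  ultimately show ?thesis using that J(1) by blast
qed

text \<open>The coordinates J of f x + E u determine x through R, since E contributes only a
  constant there; then u is recovered through K.\<close>
lemma affine_left_inverse_sum:
  fixes f R E K h' :: "(nat \<Rightarrow> 'a::comm_ring_1) \<Rightarrow> nat \<Rightarrow> 'a"
  assumes f: "affine_map m n f" and R: "coordinate_retraction n m J f B R"
    and E: "affine_map n' n E" "\<forall>u j. j \<in> J \<longrightarrow> E u j = E (\<lambda>_. 0) j"
    and K: "affine_map n n' K" "\<forall>u\<in>fvec n'. K (E u) = u"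
    and h': "affine_map n' k h'"
  obtains \<Psi> where "affine_map n (m + k) \<Psi>"
    "\<And>x u. x \<in> B \<Longrightarrow> u \<in> fvec n' \<Longrightarrow> \<Psi> (\<lambda>i. f x i + E u i) = vec_append m x (h' u)"
proof -
  have R_map: "affine_map n m R" and R_f: "\<forall>b\<in>B. R (f b) = b"
    and R_J: "\<forall>z z'. (\<forall>j\<in>J. z j = z' j) \<longrightarrow> R z = R z'"
    using R by (simp_all add: coordinate_retraction_def)
  define E0 where "E0 = E (\<lambda>_. 0)"
  have E0: "E0 \<in> fvec n" unfolding E0_def by (rule affine_map_in_fvec[OF E(1)]) (simp add: fvec_def)
  define X where "X = (\<lambda>z. R (\<lambda>i. z i - E0 i))"
  define Y where "Y = (\<lambda>z. h' (K (\<lambda>i. z i - f (X z) i)))"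
  have X: "affine_map n m X"
    unfolding X_def by (rule affine_map_comp[OF affine_map_diff[OF affine_map_id affine_map_const[OF E0]] R_map])
  have Y: "affine_map n k Y"
    unfolding Y_def
    by (rule affine_map_comp[OF affine_map_comp[OF affine_map_diff[OF affine_map_id affine_map_comp[OF X f]] K(1)] h'])
  have "X (\<lambda>i. f x i + E u i) = x" if "x \<in> B" for x u
  proof -
    have "X (\<lambda>i. f x i + E u i) = R (f x)"
      unfolding X_def
    proof (rule R_J[rule_format])
      fix j assume "j \<in> J"
      then show "(\<lambda>i. f x i + E u i - E0 i) j = f x j"
        using E(2)[rule_format, of j u] by (simp add: E0_def)
    qed
    then show ?thesis using R_f that by simp
  qed
  then have "vec_append m (X (\<lambda>i. f x i + E u i)) (Y (\<lambda>i. f x i + E u i)) = vec_append m x (h' u)"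
    if "x \<in> B" "u \<in> fvec n'" for x u
    using that K(2) by (simp add: Y_def)
  with affine_map_vec_append[OF X Y] show ?thesis by (rule that)
qed

lemma affine_copy_product:
  fixes f R E K :: "(nat \<Rightarrow> 'a::comm_ring_1) \<Rightarrow> nat \<Rightarrow> 'a"
  assumes B: "B \<subseteq> fvec m" and F: "F \<subseteq> fvec k" and f: "affine_map m n f"
    and R: "coordinate_retraction n m J f B R"
    and E: "affine_map n' n E" "\<forall>u j. j \<in> J \<longrightarrow> E u j = E (\<lambda>_. 0) j"
    and K: "affine_map n n' K" "\<forall>u\<in>fvec n'. K (E u) = u"
    and \<psi>: "nondeg_hom k n' F C \<psi>"
    and in_A: "\<forall>b\<in>B. \<forall>y\<in>F. (\<lambda>i. f b i + E (\<psi> y) i) \<in> A"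
  shows "affine_copy (m + k) n (snd (conf_prod m B (k, F))) A"
proof -
  obtain h h' where h: "affine_map k n' h" "\<forall>y\<in>F. \<psi> y = h y"
    and h': "affine_map n' k h'" "\<forall>y\<in>F. h' (\<psi> y) = y"
    using \<psi> by (rule nondeg_homE)
  obtain \<Psi> :: "(nat \<Rightarrow> 'a) \<Rightarrow> nat \<Rightarrow> 'a" where \<Psi>: "affine_map n (m + k) \<Psi>"
    "\<And>x u. x \<in> B \<Longrightarrow> u \<in> fvec n' \<Longrightarrow> \<Psi> (\<lambda>i. f x i + E u i) = vec_append m x (h' u)"
    using affine_left_inverse_sum[OF f R E K h'(1)] by blast
  define \<Phi> where "\<Phi> = (\<lambda>z i. f (vec_take m z) i + E (h (vec_drop m k z)) i)"
  have \<Phi>: "affine_map (m + k) n \<Phi>"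
    unfolding \<Phi>_def
    by (rule affine_map_add[OF affine_map_comp[OF affine_map_vec_take f]
          affine_map_comp[OF affine_map_comp[OF affine_map_vec_drop h(1)] E(1)]])
  have \<Phi>_pair: "\<Phi> (vec_append m x y) = (\<lambda>i. f x i + E (\<psi> y) i)" if "x \<in> B" "y \<in> F" for x y
    using that B F h(2) by (simp add: \<Phi>_def vec_take_append vec_drop_append subset_iff)
  have "\<psi> y \<in> fvec n'" if "y \<in> F" for y
    using affine_map_in_fvec[OF h(1)] h(2) F that by auto
  then have "nondeg_hom (m + k) n (snd (conf_prod m B (k, F))) A \<Phi>"
    using \<Phi>_pair in_A \<Psi>(2) h'(2)
    by (intro nondeg_homI[OF _ \<Phi> _ \<Psi>(1)]) (auto simp: conf_prod_eq)
  then show ?thesis unfolding affine_copy_def by blast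
qed

lemma finite_ex_aff_candidates:
  "finite (insert 0 {card A | A. A \<subseteq> (fvec n :: (nat \<Rightarrow> 'a::{finite,comm_ring_1}) set) \<and> P A})"
proof -
  have "{card A | A. A \<subseteq> (fvec n :: (nat \<Rightarrow> 'a) set) \<and> P A} \<subseteq> card ` Pow (fvec n :: (nat \<Rightarrow> 'a) set)"
    by blast
  moreover have "finite (card ` Pow (fvec n :: (nat \<Rightarrow> 'a) set))" by (simp add: finite_fvec)
  ultimately show ?thesis by (simp add: finite_subset)
qed

lemma card_le_ex_aff:
  fixes A :: "(nat \<Rightarrow> 'a::{finite,comm_ring_1}) set"
  assumes "A \<subseteq> fvec n" "\<forall>(k, C)\<in>\<B>. \<not> affine_copy k n C A"
  shows "card A \<le> ex_aff n \<B>"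
  unfolding ex_aff_def by (rule Max_ge[OF finite_ex_aff_candidates]) (use assms in blast)

lemma ex_aff_attained:
  obtains A :: "(nat \<Rightarrow> 'a::{finite,comm_ring_1}) set"
  where "A \<subseteq> fvec n" "card A = ex_aff n \<B>"
    "ex_aff n \<B> = 0 \<or> (\<forall>(k, C)\<in>\<B>. \<not> affine_copy k n C A)"
proof -
  have "ex_aff n \<B> \<in> insert 0 {card A | A. A \<subseteq> (fvec n :: (nat \<Rightarrow> 'a) set) \<and> (\<forall>(k, C)\<in>\<B>. \<not> affine_copy k n C A)}"
    unfolding ex_aff_def by (rule Max_in[OF finite_ex_aff_candidates]) simp
  then show ?thesis
  proof
    assume "ex_aff n \<B> = 0"
    then show ?thesis by (intro that[of "{}"]) auto
  next
    assume "ex_aff n \<B> \<in> {card A | A. A \<subseteq> fvec n \<and> (\<forall>(k, C)\<in>\<B>. \<not> affine_copy k n C A)}"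
    then obtain A :: "(nat \<Rightarrow> 'a) set" where "A \<subseteq> fvec n" "card A = ex_aff n \<B>"
      "\<forall>(k, C)\<in>\<B>. \<not> affine_copy k n C A"
      by auto
    then show ?thesis by (intro that) auto
  qed
qed

lemma exists_coordinate_complement:
  assumes J: "J \<subseteq> {..<n}"
  obtains K :: "(nat \<Rightarrow> 'a::comm_ring_1) \<Rightarrow> nat \<Rightarrow> 'a" and E :: "(nat \<Rightarrow> 'a) \<Rightarrow> (nat \<Rightarrow> 'a) \<Rightarrow> nat \<Rightarrow> 'a"
  where "affine_map n (n - card J) K" "\<And>v. affine_map (n - card J) n (E v)"
    "\<And>v u j. j \<in> J \<Longrightarrow> E v u j = v j"
    "\<And>v u. u \<in> fvec (n - card J) \<Longrightarrow> K (E v u) = u"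
    "\<And>v t. t \<in> fvec n \<Longrightarrow> \<forall>j\<in>J. t j = v j \<Longrightarrow> E v (K t) = t"
proof -
  define n' where "n' = n - card J"
  have "finite J" using J by (rule finite_subset) simp
  then have "card ({..<n} - J) = n'" using J by (simp add: card_Diff_subset n'_def)
  then obtain \<beta> where \<beta>: "bij_betw \<beta> {..<n'} ({..<n} - J)"
    using finite_same_card_bij[of "{..<n'}" "{..<n} - J"] by auto
  define \<beta>' where "\<beta>' = inv_into {..<n'} \<beta>"
  have \<beta>_range: "\<beta> i < n" "\<beta> i \<notin> J" "\<beta>' (\<beta> i) = i" if "i < n'" for i
  proof -
    show "\<beta> i < n" "\<beta> i \<notin> J" using bij_betw_apply[OF \<beta>] that by simp_all
    show "\<beta>' (\<beta> i) = i" unfolding \<beta>'_def using bij_betw_inv_into_left[OF \<beta>] that by simp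
  qed
  have \<beta>'_range: "\<beta>' i < n'" "\<beta> (\<beta>' i) = i" if "i < n" "i \<notin> J" for i
  proof -
    show "\<beta>' i < n'" unfolding \<beta>'_def using bij_betw_apply[OF bij_betw_inv_into[OF \<beta>]] that by simp
    show "\<beta> (\<beta>' i) = i" unfolding \<beta>'_def using bij_betw_inv_into_right[OF \<beta>] that by simp
  qed
  define K where "K = (\<lambda>z::nat \<Rightarrow> 'a. \<lambda>i. if i < n' then 0 + (if True then z (\<beta> i) else 0) else 0)"
  define E where "E = (\<lambda>v (u::nat \<Rightarrow> 'a) i.
    if i < n then (if i \<in> J then v i else 0) + (if i \<notin> J then u (\<beta>' i) else 0) else 0)"
  show ?thesis
  proof (rule that[of K E, unfolded n'_def[symmetric]])
    show "affine_map n n' K" unfolding K_def by (rule affine_map_select) (use \<beta>_range in auto)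
    show "affine_map n' n (E v)" for v unfolding E_def by (rule affine_map_select) (use \<beta>'_range in auto)
    show "E v u j = v j" if "j \<in> J" for v u j using that J by (auto simp: E_def)
    show "K (E v u) = u" if "u \<in> fvec n'" for v u
    proof
      fix i show "K (E v u) i = u i"
        using \<beta>_range[of i] fvecD[OF that, of i] by (cases "i < n'") (simp_all add: K_def E_def)
    qed
    show "E v (K t) = t" if "t \<in> fvec n" "\<forall>j\<in>J. t j = v j" for v t
    proof
      fix i show "E v (K t) i = t i"
        using \<beta>'_range[of i] that fvecD[OF that(1), of i] by (cases "i < n") (simp_all add: K_def E_def)
    qed
  qed
qed

definition shifts_into :: "nat \<Rightarrow> (nat \<Rightarrow> 'a::monoid_add) set \<Rightarrow> (nat \<Rightarrow> 'a) set \<Rightarrow> (nat \<Rightarrow> 'a) set" where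
  "shifts_into n P A = {t \<in> fvec n. \<forall>p\<in>P. (\<lambda>i. p i + t i) \<in> A}"

lemma finite_shifts_into: "finite (shifts_into n P (A :: (nat \<Rightarrow> 'a::{finite,monoid_add}) set))"
  by (rule finite_subset_fvec[of _ n]) (auto simp: shifts_into_def)

text \<open>Shifts agreeing with v on J, projected to the other coordinates, form an
  \<F>-free set: a copy of F there, placed on top of the copy f of B, would be a copy of B \<times> F in A.\<close>
lemma card_shift_class_le:
  fixes B :: "(nat \<Rightarrow> 'a::{finite,comm_ring_1}) set" and \<F> :: "'a config set"
  assumes B: "B \<subseteq> fvec m" and fam: "\<forall>(k, F)\<in>\<F>. F \<subseteq> fvec k" and f: "affine_map m n f"
    and J: "J \<subseteq> {..<n}" and R: "coordinate_retraction n m J f B R"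
    and free: "\<forall>(k, C)\<in>conf_prod m B ` \<F>. \<not> affine_copy k n C A"
  shows "card {t \<in> shifts_into n (f ` B) A. restrict t J = v} \<le> ex_aff (n - card J) \<F>"
proof -
  obtain K :: "(nat \<Rightarrow> 'a) \<Rightarrow> nat \<Rightarrow> 'a" and E :: "(nat \<Rightarrow> 'a) \<Rightarrow> (nat \<Rightarrow> 'a) \<Rightarrow> nat \<Rightarrow> 'a"
    where K: "affine_map n (n - card J) K" and E: "\<And>v. affine_map (n - card J) n (E v)"
    and E_J: "\<And>v u j. j \<in> J \<Longrightarrow> E v u j = v j"
    and KE: "\<And>v u. u \<in> fvec (n - card J) \<Longrightarrow> K (E v u) = u"
    and EK: "\<And>v t. t \<in> fvec n \<Longrightarrow> \<forall>j\<in>J. t j = v j \<Longrightarrow> E v (K t) = t"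
    using exists_coordinate_complement[OF J] by blast
  define T where "T = {t \<in> shifts_into n (f ` B) A. restrict t J = v}"
  have EK_T: "E v (K t) = t" if "t \<in> T" for t
  proof (rule EK)
    show "t \<in> fvec n" using that by (simp add: T_def shifts_into_def)
    show "\<forall>j\<in>J. t j = v j" using that by (auto simp: T_def)
  qed
  have inj: "inj_on K T" by (rule inj_on_inverseI[of _ "E v"]) (rule EK_T)
  have C_fvec: "K ` T \<subseteq> fvec (n - card J)"
    using affine_map_in_fvec[OF K] by (auto simp: T_def shifts_into_def)
  have C_free: "\<forall>(k, F)\<in>\<F>. \<not> affine_copy k (n - card J) F (K ` T)"
  proof (clarify)
    fix k F assume kF: "(k, F) \<in> \<F>" and "affine_copy k (n - card J) F (K ` T)"
    then obtain \<psi> where \<psi>: "nondeg_hom k (n - card J) F (K ` T) \<psi>" unfolding affine_copy_def by blast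
    have in_A: "\<forall>b\<in>B. \<forall>y\<in>F. (\<lambda>i. f b i + E v (\<psi> y) i) \<in> A"
    proof (intro ballI)
      fix b y assume b: "b \<in> B" and y: "y \<in> F"
      then obtain t where t: "t \<in> T" "\<psi> y = K t" using \<psi> by (auto simp: nondeg_hom_def)
      then show "(\<lambda>i. f b i + E v (\<psi> y) i) \<in> A" using b EK_T by (simp add: T_def shifts_into_def)
    qed
    have "affine_copy (m + k) n (snd (conf_prod m B (k, F))) A"
      by (rule affine_copy_product[OF B _ f R E[of v] _ K _ \<psi> in_A]) (use fam kF E_J KE in auto)
    moreover have "conf_prod m B (k, F) \<in> conf_prod m B ` \<F>" using kF by (rule imageI)
    ultimately show False using free by (auto simp: conf_prod_eq)
  qed
  have "card T = card (K ` T)" using card_image[OF inj] by simp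
  also have "\<dots> \<le> ex_aff (n - card J) \<F>" by (rule card_le_ex_aff[OF C_fvec C_free])
  finally show ?thesis unfolding T_def .
qed

lemma card_shifts_into_le:
  fixes B :: "(nat \<Rightarrow> 'a::{finite,comm_ring_1}) set" and \<F> :: "'a config set"
  assumes B: "B \<subseteq> fvec m" and fam: "\<forall>(k, F)\<in>\<F>. F \<subseteq> fvec k" and f: "affine_map m n f"
    and J: "J \<subseteq> {..<n}" and R: "coordinate_retraction n m J f B R"
    and free: "\<forall>(k, C)\<in>conf_prod m B ` \<F>. \<not> affine_copy k n C A"
  shows "card (shifts_into n (f ` B) A) \<le> card (UNIV :: 'a set) ^ card J * ex_aff (n - card J) \<F>"
proof -
  have "finite J" using J by (rule finite_subset) simp
  have "card (shifts_into n (f ` B) A) \<le> card (PiE J (\<lambda>_. UNIV :: 'a set)) * ex_aff (n - card J) \<F>"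
  proof (rule card_le_fibers[OF finite_shifts_into _ _ card_shift_class_le[OF B fam f J R free]])
    show "finite (PiE J (\<lambda>_. UNIV :: 'a set))" using \<open>finite J\<close> by (simp add: finite_PiE)
    show "(\<lambda>t. restrict t J) ` shifts_into n (f ` B) A \<subseteq> PiE J (\<lambda>_. UNIV)" by auto
  qed
  then show ?thesis using \<open>finite J\<close> by (simp add: card_PiE)
qed

lemma affine_hom_eq_translate:
  fixes \<phi> \<phi>0 :: "(nat \<Rightarrow> 'a::comm_ring_1) \<Rightarrow> nat \<Rightarrow> 'a"
  assumes B: "B \<subseteq> fvec m" and S: "S \<subseteq> B" "b1 \<in> S" and span: "B \<subseteq> aff_span S"
    and \<phi>: "affine_hom m n B \<phi>" and \<phi>0: "affine_hom m n B \<phi>0"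
    and diff: "\<forall>x\<in>S. (\<lambda>i. \<phi> x i - \<phi> b1 i) = (\<lambda>i. \<phi>0 x i - \<phi>0 b1 i)"
  shows "\<forall>b\<in>B. \<phi> b = (\<lambda>i. \<phi>0 b i + (\<phi> b1 i - \<phi>0 b1 i))"
proof
  fix b assume b: "b \<in> B"
  obtain f0 where f0: "affine_map m n f0" "\<forall>x\<in>B. \<phi>0 x = f0 x"
    using \<phi>0 unfolding affine_hom_def by blast
  obtain f where f: "affine_map m n f" "\<forall>x\<in>B. \<phi> x = f x"
    using \<phi> unfolding affine_hom_def by blast
  have b1: "b1 \<in> B" "b1 \<in> fvec m" using S B by auto
  have "affine_map m n (\<lambda>x i. f0 x i + (f b1 i - f0 b1 i))"
    using affine_map_in_fvec[OF f(1) b1(2)] affine_map_in_fvec[OF f0(1) b1(2)]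
    by (intro affine_map_add[OF f0(1)] affine_map_const) (simp add: fvec_def)
  then have "affine_hom m n B (\<lambda>x i. \<phi>0 x i + (\<phi> b1 i - \<phi>0 b1 i))"
    unfolding affine_hom_def using f(2) f0(2) b1(1) by auto
  moreover have "\<forall>x\<in>S. \<phi> x = (\<lambda>i. \<phi>0 x i + (\<phi> b1 i - \<phi>0 b1 i))"
    using diff by (simp add: fun_eq_iff algebra_simps)
  ultimately show "\<phi> b = (\<lambda>i. \<phi>0 b i + (\<phi> b1 i - \<phi>0 b1 i))"
    using affine_hom_eq_on_aff_span[OF B S(1) \<phi>] b span by blast
qed

definition nondeg_homs :: "nat \<Rightarrow> nat \<Rightarrow> (nat \<Rightarrow> 'a::comm_ring_1) set \<Rightarrow> (nat \<Rightarrow> 'a) set \<Rightarrow> ((nat \<Rightarrow> 'a) \<Rightarrow> nat \<Rightarrow> 'a) set" where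
  "nondeg_homs m n B A = {\<phi>. nondeg_hom m n B A \<phi> \<and> (\<forall>x. x \<notin> B \<longrightarrow> \<phi> x = (\<lambda>_. 0))}"

lemma nondeg_homs_in_fvec:
  assumes "\<phi> \<in> nondeg_homs m n B A" "B \<subseteq> fvec m" "x \<in> B"
  shows "\<phi> x \<in> fvec n"
proof -
  obtain f where "affine_map m n f" "\<forall>x\<in>B. \<phi> x = f x"
    using assms(1) unfolding nondeg_homs_def nondeg_hom_def affine_hom_def by blast
  then show ?thesis using affine_map_in_fvec assms(2,3) by (metis subsetD)
qed

lemma finite_nondeg_homs:
  assumes "B \<subseteq> (fvec m :: (nat \<Rightarrow> 'a::{finite,comm_ring_1}) set)"
  shows "finite (nondeg_homs m n B A)"
proof (rule finite_subset)
  show "nondeg_homs m n B A \<subseteq> {\<phi>. \<forall>x. (x \<in> B \<longrightarrow> \<phi> x \<in> fvec n) \<and> (x \<notin> B \<longrightarrow> \<phi> x = (\<lambda>_. 0))}"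
    using nondeg_homs_in_fvec[OF _ assms] by (auto simp: nondeg_homs_def)
  show "finite \<dots>"
    by (rule finite_set_of_finite_funs) (simp_all add: finite_subset_fvec[OF assms] finite_fvec)
qed

text \<open>Homomorphisms with the same differences on S as \<phi>0 are translates of \<phi>0.\<close>
lemma card_hom_fiber_le_shifts:
  fixes B :: "(nat \<Rightarrow> 'a::{finite,comm_ring_1}) set"
  assumes B: "B \<subseteq> fvec m" and S: "S \<subseteq> B" "b1 \<in> S" and span: "B \<subseteq> aff_span S"
    and \<phi>0: "\<phi>0 \<in> nondeg_homs m n B A"
  shows "card {\<phi> \<in> nondeg_homs m n B A. \<forall>x\<in>S. (\<lambda>i. \<phi> x i - \<phi> b1 i) = (\<lambda>i. \<phi>0 x i - \<phi>0 b1 i)}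
    \<le> card (shifts_into n (\<phi>0 ` B) A)"
proof -
  let ?fiber = "{\<phi> \<in> nondeg_homs m n B A. \<forall>x\<in>S. (\<lambda>i. \<phi> x i - \<phi> b1 i) = (\<lambda>i. \<phi>0 x i - \<phi>0 b1 i)}"
  define \<tau> where "\<tau> = (\<lambda>\<phi> :: (nat \<Rightarrow> 'a) \<Rightarrow> nat \<Rightarrow> 'a. \<lambda>i. \<phi> b1 i - \<phi>0 b1 i)"
  have shift: "\<forall>b\<in>B. \<phi> b = (\<lambda>i. \<phi>0 b i + \<tau> \<phi> i)" if "\<phi> \<in> ?fiber" for \<phi>
  proof -
    have "affine_hom m n B \<phi>" "affine_hom m n B \<phi>0"
      using that \<phi>0 by (simp_all add: nondeg_homs_def nondeg_hom_def)
    moreover have "\<forall>x\<in>S. (\<lambda>i. \<phi> x i - \<phi> b1 i) = (\<lambda>i. \<phi>0 x i - \<phi>0 b1 i)" using that by simp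
    ultimately show ?thesis unfolding \<tau>_def by (rule affine_hom_eq_translate[OF B S span])
  qed
  have "\<tau> \<phi> \<in> shifts_into n (\<phi>0 ` B) A" if "\<phi> \<in> ?fiber" for \<phi>
  proof -
    have "b1 \<in> B" using S by blast
    then have "\<phi> b1 \<in> fvec n" "\<phi>0 b1 \<in> fvec n"
      using nondeg_homs_in_fvec[OF _ B] that \<phi>0 by auto
    then have "\<tau> \<phi> \<in> fvec n" by (simp add: \<tau>_def fvec_def)
    moreover have "\<phi> b \<in> A" if "b \<in> B" for b
      using \<open>\<phi> \<in> ?fiber\<close> that by (simp add: nondeg_homs_def nondeg_hom_def)
    ultimately show ?thesis using shift[OF that] by (auto simp: shifts_into_def)
  qed
  moreover have "inj_on \<tau> ?fiber"
  proof (rule inj_onI)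
    fix \<phi> \<psi> assume \<phi>: "\<phi> \<in> ?fiber" and \<psi>: "\<psi> \<in> ?fiber" and "\<tau> \<phi> = \<tau> \<psi>"
    then have "\<phi> x = \<psi> x" for x
      using shift[OF \<phi>] shift[OF \<psi>] by (cases "x \<in> B") (simp_all add: nondeg_homs_def)
    then show "\<phi> = \<psi>" ..
  qed
  ultimately show ?thesis by (intro card_inj_on_le finite_shifts_into) auto
qed

lemma card_hom_fiber_le:
  fixes B :: "(nat \<Rightarrow> 'a::{finite,field}) set" and \<F> :: "'a config set"
  assumes B: "B \<subseteq> fvec m" and S: "S \<subseteq> B" "finite S" "aff_indep S" "b1 \<in> S"
    and span: "B \<subseteq> aff_span S" and fam: "\<forall>(k, F)\<in>\<F>. F \<subseteq> fvec k"
    and free: "\<forall>(k, C)\<in>conf_prod m B ` \<F>. \<not> affine_copy k n C A"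
    and \<phi>0: "\<phi>0 \<in> nondeg_homs m n B A"
  shows "card {\<phi> \<in> nondeg_homs m n B A. \<forall>x\<in>S. (\<lambda>i. \<phi> x i - \<phi> b1 i) = (\<lambda>i. \<phi>0 x i - \<phi>0 b1 i)}
    \<le> card (UNIV :: 'a set) ^ (card S - 1) * ex_aff (n - (card S - 1)) \<F>"
proof -
  obtain f0 g0 where f0: "affine_map m n f0" "\<forall>b\<in>B. \<phi>0 b = f0 b"
    and g0: "affine_map n m g0" "\<forall>b\<in>B. g0 (\<phi>0 b) = b"
    using \<phi>0 unfolding nondeg_homs_def by (auto elim: nondeg_homE)
  have "\<forall>b\<in>B. g0 (f0 b) = b" using f0(2) g0(2) by simp
  then obtain J R where J: "J \<subseteq> {..<n}" "card J = card S - 1"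
    and R: "coordinate_retraction n m J f0 B R"
    using exists_coordinate_retraction[OF B S(1-3) _ span f0(1) g0(1)] S(4) by blast
  have "\<phi>0 ` B = f0 ` B" using f0(2) by (simp cong: image_cong)
  then have "card {\<phi> \<in> nondeg_homs m n B A. \<forall>x\<in>S. (\<lambda>i. \<phi> x i - \<phi> b1 i) = (\<lambda>i. \<phi>0 x i - \<phi>0 b1 i)}
      \<le> card (shifts_into n (f0 ` B) A)"
    using card_hom_fiber_le_shifts[OF B S(1,4) span \<phi>0] by simp
  also have "\<dots> \<le> card (UNIV :: 'a set) ^ card J * ex_aff (n - card J) \<F>"
    by (rule card_shifts_into_le[OF B fam f0(1) J(1) R free])
  finally show ?thesis unfolding J(2) .
qed

lemma restrict_differences_eq_iff:
  assumes "b1 \<in> S"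
  shows "restrict (\<lambda>x i. \<phi> x i - \<phi> b1 i) (S - {b1}) = restrict (\<lambda>x i. \<psi> x i - \<psi> b1 i) (S - {b1})
    \<longleftrightarrow> (\<forall>x\<in>S. (\<lambda>i. \<phi> x i - \<phi> b1 i) = (\<lambda>i. (\<psi> x i :: 'a::ab_group_add) - \<psi> b1 i))"
proof
  assume eq: "restrict (\<lambda>x i. \<phi> x i - \<phi> b1 i) (S - {b1}) = restrict (\<lambda>x i. \<psi> x i - \<psi> b1 i) (S - {b1})"
  show "\<forall>x\<in>S. (\<lambda>i. \<phi> x i - \<phi> b1 i) = (\<lambda>i. \<psi> x i - \<psi> b1 i)"
  proof
    fix x assume "x \<in> S"
    show "(\<lambda>i. \<phi> x i - \<phi> b1 i) = (\<lambda>i. \<psi> x i - \<psi> b1 i)"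
    proof (cases "x = b1")
      case False
      then show ?thesis using fun_cong[OF eq, of x] \<open>x \<in> S\<close> by simp
    qed simp
  qed
next
  assume "\<forall>x\<in>S. (\<lambda>i. \<phi> x i - \<phi> b1 i) = (\<lambda>i. \<psi> x i - \<psi> b1 i)"
  then show "restrict (\<lambda>x i. \<phi> x i - \<phi> b1 i) (S - {b1}) = restrict (\<lambda>x i. \<psi> x i - \<psi> b1 i) (S - {b1})"
    by (intro restrict_ext) simp
qed

text \<open>A homomorphism is determined by its differences on S, which take at most
  (q^n)^(card S - 1) values, and by one translation.\<close>
lemma num_nondeg_hom_le:
  fixes B :: "(nat \<Rightarrow> 'a::{finite,field}) set" and \<F> :: "'a config set"
  assumes B: "B \<subseteq> fvec m" and S: "S \<subseteq> B" "finite S" "aff_indep S" "b1 \<in> S"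
    and span: "B \<subseteq> aff_span S" and fam: "\<forall>(k, F)\<in>\<F>. F \<subseteq> fvec k"
    and free: "\<forall>(k, C)\<in>conf_prod m B ` \<F>. \<not> affine_copy k n C A"
  shows "num_nondeg_hom m n B A
    \<le> (card (UNIV :: 'a set) ^ n) ^ (card S - 1) * (card (UNIV :: 'a set) ^ (card S - 1) * ex_aff (n - (card S - 1)) \<F>)"
proof -
  let ?H = "nondeg_homs m n B A"
  define \<delta> where "\<delta> = (\<lambda>\<phi> :: (nat \<Rightarrow> 'a) \<Rightarrow> nat \<Rightarrow> 'a. restrict (\<lambda>x i. \<phi> x i - \<phi> b1 i) (S - {b1}))"
  define D where "D = PiE (S - {b1}) (\<lambda>_. fvec n :: (nat \<Rightarrow> 'a) set)"
  have "\<delta> \<phi> \<in> D" if "\<phi> \<in> ?H" for \<phi>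
  proof -
    have "\<phi> x \<in> fvec n" if "x \<in> S" for x
      using nondeg_homs_in_fvec[OF \<open>\<phi> \<in> ?H\<close> B] S(1) that by blast
    then show ?thesis using S(4) by (simp add: D_def \<delta>_def fvec_def)
  qed
  moreover have "card {\<phi> \<in> ?H. \<delta> \<phi> = d}
      \<le> card (UNIV :: 'a set) ^ (card S - 1) * ex_aff (n - (card S - 1)) \<F>" for d
  proof (cases "\<exists>\<phi>0 \<in> ?H. \<delta> \<phi>0 = d")
    case True
    then obtain \<phi>0 where \<phi>0: "\<phi>0 \<in> ?H" "d = \<delta> \<phi>0" by blast
    then show ?thesis
      using card_hom_fiber_le[OF B S span fam free \<phi>0(1)]
      by (simp only: \<delta>_def restrict_differences_eq_iff[OF S(4)])
  next
    case False
    then have "{\<phi> \<in> ?H. \<delta> \<phi> = d} = {}" by blast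
    then show ?thesis by (simp only: card.empty zero_le)
  qed
  ultimately have "card ?H \<le> card D * (card (UNIV :: 'a set) ^ (card S - 1) * ex_aff (n - (card S - 1)) \<F>)"
    by (intro card_le_fibers[OF finite_nondeg_homs[OF B]]) (auto simp: D_def S(2) finite_PiE finite_fvec)
  moreover have "card D \<le> (card (UNIV :: 'a set) ^ n) ^ (card S - 1)"
    using S(2,4) power_mono[OF card_fvec_le, of n "card S - 1"] by (simp add: D_def card_PiE)
  ultimately show ?thesis
    unfolding num_nondeg_hom_def nondeg_homs_def[symmetric] by (meson le_trans mult_le_mono1)
qed

lemma c_min_le:
  assumes "A \<subseteq> (fvec n :: (nat \<Rightarrow> 'a::{finite,comm_ring_1}) set)" "card A = s"
  shows "c_min m n B s \<le> num_nondeg_hom m n B A"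
proof -
  have "{num_nondeg_hom m n B A | A. A \<subseteq> (fvec n :: (nat \<Rightarrow> 'a) set) \<and> card A = s}
      \<subseteq> num_nondeg_hom m n B ` Pow (fvec n)"
    by blast
  then have "finite {num_nondeg_hom m n B A | A. A \<subseteq> (fvec n :: (nat \<Rightarrow> 'a) set) \<and> card A = s}"
    by (rule finite_subset) (simp add: finite_fvec)
  then show ?thesis unfolding c_min_def by (rule Min_le) (use assms in blast)
qed

lemma num_nondeg_hom_empty: "B \<noteq> {} \<Longrightarrow> num_nondeg_hom m n B {} = 0"
  by (simp add: num_nondeg_hom_def nondeg_hom_def)

theorem lemma4p1:
  fixes B :: "(nat \<Rightarrow> 'a::{finite,field}) set"
    and \<F> :: "'a config set"
    and m n :: nat
  assumes "B \<subseteq> fvec m"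
    and "rank_aff B \<ge> 1"
    and "\<forall>(k, F)\<in>\<F>. F \<subseteq> fvec k"
    and "n \<ge> rank_aff B"
  shows "c_min m n B (ex_aff n (conf_prod m B ` \<F>))
     \<le> card (UNIV :: 'a set) ^ (rank_aff B - 1) * (card (UNIV :: 'a set) ^ n) ^ (rank_aff B - 1)
        * ex_aff (n - rank_aff B + 1) \<F>"
proof -
  obtain S where S: "S \<subseteq> B" "aff_indep S" "card S = rank_aff B"
    by (rule rank_aff_attained[OF assms(1)])
  have "finite S" using S(1) assms(1) by (intro finite_subset_fvec[of S m]) blast
  have "S \<noteq> {}" using S(3) assms(2) by auto
  then obtain b1 where "b1 \<in> S" by blast
  have span: "B \<subseteq> aff_span S" by (rule subset_aff_span_of_max_aff_indep[OF assms(1) S])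
  obtain A :: "(nat \<Rightarrow> 'a) set" where A: "A \<subseteq> fvec n" "card A = ex_aff n (conf_prod m B ` \<F>)"
    "ex_aff n (conf_prod m B ` \<F>) = 0 \<or> (\<forall>(k, C)\<in>conf_prod m B ` \<F>. \<not> affine_copy k n C A)"
    by (rule ex_aff_attained)
  have "n - (rank_aff B - 1) = n - rank_aff B + 1" using assms(2,4) by simp
  let ?q = "card (UNIV :: 'a set)"
  have "c_min m n B (ex_aff n (conf_prod m B ` \<F>)) \<le> num_nondeg_hom m n B A"
    by (rule c_min_le[OF A(1,2)])
  also have "\<dots> \<le> (?q ^ n) ^ (card S - 1) * (?q ^ (card S - 1) * ex_aff (n - (card S - 1)) \<F>)"
  proof (cases "ex_aff n (conf_prod m B ` \<F>) = 0")
    case True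
    then have "A = {}" using A(2) finite_subset_fvec[OF A(1)] by simp
    moreover have "B \<noteq> {}" using \<open>b1 \<in> S\<close> S(1) by blast
    ultimately show ?thesis by (simp add: num_nondeg_hom_empty)
  next
    case False
    then show ?thesis
      using A(3) num_nondeg_hom_le[OF assms(1) S(1) \<open>finite S\<close> S(2) \<open>b1 \<in> S\<close> span assms(3)] by simp
  qed
  finally show ?thesis unfolding S(3) \<open>n - (rank_aff B - 1) = n - rank_aff B + 1\<close> by (simp only: mult_ac)
qed

end
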